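(* Let $B,\lambda>0$, $q\in\mathbb N$, $\alpha\in(0,1]$, $\beta=q+\alpha\ge1/2$, and let $\mathcal F$ be the set of functions $f:[0,1]\to\mathbb R$ that are $q$ times differentiable with $\|f^{(k)}\|_\infty\le B$ for all $k\in\{0,\ldots,q\}$ and $|f^{(q)}(x)-f^{(q)}(y)|\le\lambda|x-y|^\alpha$ for all $x,y\in[0,1]$. Let $\gamma>0$, $\delta_x=2(q!\gamma/(2\lambda))^{1/\beta}$, $\delta_y=\gamma/e$, and assume $1/\delta_x$ and $2B/\delta_y$ are integers. Then, with $\mathcal F^{(0)}$ and $\mathcal F^{(M)}$ as defined in the context: (i) for every $f\in\mathcal F$ there is $g\in\mathcal F^{(0)}$ with $\|f-g\|_\infty\le\gamma$; (ii) for every $M\ge1$ and every $f\in\mathcal F$ there is $g\in\mathcal F^{(M)}$ with $\|f-g\|_\infty\le\gamma/2^M$.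
   Context: $[x]_c=\min\{c,\max\{-c,x\}\}$ denotes clipping. Let $I_a=[(a-1)\delta_x,a\delta_x)$, $a=1,\ldots,1/\delta_x$ (last closed at $1$), with center $x_a$. For $m\ge1$ split $I_a$ into $4^m$ consecutive subintervals $I_a^{(m,n)}$, $n=1,\ldots,4^m$, of length $\delta_x/4^m$, with centers $x_a^{(m,n)}$; for $m\ge2$ let $n_{m-1}$ be the index with $I_a^{(m,n)}\subset I_a^{(m-1,n_{m-1})}$. Let $\mathcal Y^{(m)}=\{-B+j\delta_y/2^m:j=0,\ldots,2^{m+1}B/\delta_y\}$ for $m\ge0$. Let $\mathcal P_a^{(0)}$ be the set of functions $x\mapsto[\sum_{i=0}^q\frac{a_i}{i!}(x-x_a)^i]_B$ with $a_0,\ldots,a_q\in\mathcal Y^{(0)}$, and $\mathcal P_a^{(m,n)}$ the set of functions $x\mapsto[\sum_{i=0}^q\frac{a_i}{i!}(x-x_a^{(m,n)})^i]_B$ with $a_i\in\mathcal Y^{(m)}$. Let $\mathcal Q_a^{(m,n)}=\{[P-P']_{3\gamma/2^m}:P\in\mathcal P_a^{(m,n)},P'\in\mathcal P_a^{(m-1,n_{m-1})}\}$ for $m\ge2$, and with $\mathcal P_a^{(0)}$ in place of $\mathcal P_a^{(m-1,n_{m-1})}$ for $m=1$. $\mathcal F^{(0)}$ is the set of functions $\sum_{a}P_a^{(0)}(x)\mathbb 1\{x\in I_a\}$ with $P_a^{(0)}\in\mathcal P_a^{(0)}$; $\mathcal F^{(M)}$ is the set of functions $\sum_aP_a^{(0)}(x)\mathbb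 1\{x\in I_a\}+\sum_{m=1}^M\sum_a\sum_{n=1}^{4^m}Q_a^{(m,n)}(x)\mathbb 1\{x\in I_a^{(m,n)}\}$ with $P_a^{(0)}\in\mathcal P_a^{(0)}$, $Q_a^{(m,n)}\in\mathcal Q_a^{(m,n)}$. *)

theory Defs
  imports "HOL-Analysis.Analysis"
begin

definition clip :: "real \<Rightarrow> real \<Rightarrow> real" where
  "clip c x = min c (max (-c) x)"

definition holder_class :: "real \<Rightarrow> real \<Rightarrow> nat \<Rightarrow> real \<Rightarrow> (real \<Rightarrow> real) set" where
  "holder_class B lam q alpha = {f. \<exists>D :: nat \<Rightarrow> real \<Rightarrow> real.
      (\<forall>x\<in>{0..1}. D 0 x = f x) \<and>
      (\<forall>k<q. \<forall>x\<in>{0..1}. (D k has_real_derivative D (Suc k) x) (at x within {0..1})) \<and>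
      (\<forall>k\<le>q. \<forall>x\<in>{0..1}. \<bar>D k x\<bar> \<le> B) \<and>
      (\<forall>x\<in>{0..1}. \<forall>y\<in>{0..1}. \<bar>D q x - D q y\<bar> \<le> lam * \<bar>x - y\<bar> powr alpha)}"

definition idx :: "real \<Rightarrow> nat set" where
  "idx dx = {a. 1 \<le> a \<and> real a \<le> 1 / dx}"

text \<open>Left/right endpoints of I_a^(m,n); (m,n) = (0,1) gives I_a itself.\<close>
definition lo_pt :: "real \<Rightarrow> nat \<Rightarrow> nat \<Rightarrow> nat \<Rightarrow> real" where
  "lo_pt dx a m n = (real a - 1) * dx + (real n - 1) * dx / 4 ^ m"

definition hi_pt :: "real \<Rightarrow> nat \<Rightarrow> nat \<Rightarrow> nat \<Rightarrow> real" where
  "hi_pt dx a m n = (real a - 1) * dx + real n * dx / 4 ^ m"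

definition subint :: "real \<Rightarrow> nat \<Rightarrow> nat \<Rightarrow> nat \<Rightarrow> real set" where
  "subint dx a m n = {x. lo_pt dx a m n \<le> x \<and>
      (x < hi_pt dx a m n \<or> (hi_pt dx a m n = 1 \<and> x = 1))}"

definition center :: "real \<Rightarrow> nat \<Rightarrow> nat \<Rightarrow> nat \<Rightarrow> real" where
  "center dx a m n = (lo_pt dx a m n + hi_pt dx a m n) / 2"

definition grid :: "real \<Rightarrow> real \<Rightarrow> nat \<Rightarrow> real set" where
  "grid B dy m = {- B + real j * dy / 2 ^ m | j :: nat. real j \<le> 2 ^ (m + 1) * B / dy}"

text \<open>P_a^(m,n); P_a^(0) is the case m = 0, n = 1 (center x_a, grid Y^(0)).\<close>
definition polyset :: "nat \<Rightarrow> real \<Rightarrow> real \<Rightarrow> real \<Rightarrow> nat \<Rightarrow> nat \<Rightarrow> nat \<Rightarrow> (real \<Rightarrow> real) set" where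
  "polyset q B dx dy a m n = {(\<lambda>x. clip B (\<Sum>i\<le>q. c i / fact i * (x - center dx a m n) ^ i)) | c.
      \<forall>i\<le>q. c i \<in> grid B dy m}"

text \<open>Parent index n_(m-1) (1-based): (n-1) div 4 + 1; for m = 1 this is 1.\<close>
definition parent :: "nat \<Rightarrow> nat" where
  "parent n = (n - 1) div 4 + 1"

definition Qset :: "nat \<Rightarrow> real \<Rightarrow> real \<Rightarrow> real \<Rightarrow> real \<Rightarrow> nat \<Rightarrow> nat \<Rightarrow> nat \<Rightarrow> (real \<Rightarrow> real) set" where
  "Qset q B gam dx dy a m n = {(\<lambda>x. clip (3 * gam / 2 ^ m) (P x - P' x)) | P P'.
      P \<in> polyset q B dx dy a m n \<and> P' \<in> polyset q B dx dy a (m - 1) (parent n)}"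

text \<open>F^(M); F^(0) is the case M = 0.\<close>
definition Fclass :: "nat \<Rightarrow> real \<Rightarrow> real \<Rightarrow> real \<Rightarrow> real \<Rightarrow> nat \<Rightarrow> (real \<Rightarrow> real) set" where
  "Fclass q B gam dx dy M = {(\<lambda>x. (\<Sum>a\<in>idx dx. P a x * of_bool (x \<in> subint dx a 0 1)) +
        (\<Sum>m\<in>{1..M}. \<Sum>a\<in>idx dx. \<Sum>n\<in>{1..4 ^ m}. Q a m n x * of_bool (x \<in> subint dx a m n)))
      | P Q. (\<forall>a\<in>idx dx. P a \<in> polyset q B dx dy a 0 1) \<and>
        (\<forall>m\<in>{1..M}. \<forall>a\<in>idx dx. \<forall>n\<in>{1..4 ^ m}. Q a m n \<in> Qset q B gam dx dy a m n)}"

end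

theory Submission
  imports Defs
begin

text \<open>On a cell of level m (width dx/4^m, centre c), f is within
  lam (dx/(2*4^m))^beta / q! <= gam/2^(m+1) of its Taylor polynomial at c: the Hoelder bound on
  the q-th derivative is integrated q times, and the choice of dx together with beta >= 1/2 makes
  this bound halve from one level to the next. Rounding the Taylor coefficients to the grid Y^(m)
  moves the polynomial by at most e * dy/2^(m+1) = gam/2^(m+1), and clipping to [-B,B] cannot
  increase the error since |f| <= B. So every cell of every level carries a piece P^(m) within
  gam/2^m of f. At each point, P^(0) plus the differences P^(m) - P^(m-1) clipped at 3 gam/2^m
  telescopes to P^(M): the clipping is inactive because consecutive levels differ by at most
  gam/2^m + gam/2^(m-1).\<close>

section \<open>Taylor expansion with Hoelder remainder\<close>

lemma abs_diff_le_of_deriv_le: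
  fixes h g h' g' :: "real \<Rightarrow> real"
  assumes "a \<le> b" "continuous_on {a..b} h" "continuous_on {a..b} g"
    and "\<And>t. a < t \<Longrightarrow> t < b \<Longrightarrow> (h has_real_derivative h' t) (at t)"
    and "\<And>t. a < t \<Longrightarrow> t < b \<Longrightarrow> (g has_real_derivative g' t) (at t)"
    and "\<And>t. a < t \<Longrightarrow> t < b \<Longrightarrow> \<bar>h' t\<bar> \<le> g' t"
  shows "\<bar>h b - h a\<bar> \<le> g b - g a"
proof -
  have "(\<lambda>t. g t + s * h t) a \<le> (\<lambda>t. g t + s * h t) b" if "\<bar>s\<bar> = 1" for s
  proof (rule DERIV_nonneg_imp_increasing_open[OF assms(1)])
    fix t assume "a < t" "t < b"
    moreover have "0 \<le> g' t + s * h' t"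
      using assms(6)[OF \<open>a < t\<close> \<open>t < b\<close>] that by (auto simp: abs_le_iff abs_if split: if_splits)
    ultimately show "\<exists>y. ((\<lambda>t. g t + s * h t) has_real_derivative y) (at t) \<and> 0 \<le> y"
      using assms(4,5) by (intro exI[of _ "g' t + s * h' t"]) (auto intro!: derivative_eq_intros)
  qed (use assms(2,3) in \<open>intro continuous_intros\<close>)
  from this[of 1] this[of "-1"] show ?thesis by simp
qed

lemma abs_le_powr_of_deriv_le_powr:
  fixes h h' :: "real \<Rightarrow> real"
  assumes c: "c \<in> {a..b}" and x: "x \<in> {a..b}" and "h c = 0" and "r \<ge> 0"
    and h': "\<And>t. t \<in> {a..b} \<Longrightarrow> (h has_real_derivative h' t) (at t within {a..b})"
    and bound: "\<And>t. t \<in> {a..b} \<Longrightarrow> \<bar>h' t\<bar> \<le> K * \<bar>t - c\<bar> powr r"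
  shows "\<bar>h x\<bar> \<le> K / (r + 1) * \<bar>x - c\<bar> powr (r + 1)"
proof -
  have cont: "continuous_on {u..v} h" if "u \<in> {a..b}" "v \<in> {a..b}" for u v
    using continuous_on_subset[OF DERIV_continuous_on[OF h']] that by auto
  have h'_at: "(h has_real_derivative h' t) (at t)" if "a < t" "t < b" for t
    using h'[of t] that by (simp add: at_within_Icc_at)
  show ?thesis
  proof (cases "c \<le> x")
    case True
    have "\<bar>h x - h c\<bar> \<le> K / (r + 1) * (x - c) powr (r + 1) - K / (r + 1) * (c - c) powr (r + 1)"
    proof (rule abs_diff_le_of_deriv_le[OF True cont[OF c x], where h'=h' and g'="\<lambda>t. K * (t - c) powr r"])
      show "continuous_on {c..x} (\<lambda>t. K / (r + 1) * (t - c) powr (r + 1))"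
        using \<open>r \<ge> 0\<close> by (intro continuous_intros continuous_on_powr') auto
      fix t assume "c < t" "t < x"
      then show "(h has_real_derivative h' t) (at t)" "\<bar>h' t\<bar> \<le> K * (t - c) powr r"
        using h'_at bound[of t] c x by auto
      show "((\<lambda>t. K / (r + 1) * (t - c) powr (r + 1)) has_real_derivative K * (t - c) powr r) (at t)"
        using \<open>c < t\<close> \<open>r \<ge> 0\<close> by (auto intro!: derivative_eq_intros)
    qed
    then show ?thesis using True \<open>h c = 0\<close> \<open>r \<ge> 0\<close> by simp
  next
    case False
    have "\<bar>h c - h x\<bar> \<le> - K / (r + 1) * (c - c) powr (r + 1) - - K / (r + 1) * (c - x) powr (r + 1)"
    proof (rule abs_diff_le_of_deriv_le[OF _ cont[OF x c], where h'=h' and g'="\<lambda>t. K * (c - t) powr r"])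
      show "x \<le> c" using False by simp
      show "continuous_on {x..c} (\<lambda>t. - K / (r + 1) * (c - t) powr (r + 1))"
        using \<open>r \<ge> 0\<close> by (intro continuous_intros continuous_on_powr') auto
      fix t assume "x < t" "t < c"
      then show "(h has_real_derivative h' t) (at t)" "\<bar>h' t\<bar> \<le> K * (c - t) powr r"
        using h'_at bound[of t] c x by auto
      show "((\<lambda>t. - K / (r + 1) * (c - t) powr (r + 1)) has_real_derivative K * (c - t) powr r) (at t)"
        using \<open>t < c\<close> \<open>r \<ge> 0\<close> by (auto intro!: derivative_eq_intros)
    qed
    then show ?thesis using False \<open>h c = 0\<close> \<open>r \<ge> 0\<close> by simp
  qed
qed

lemma taylor_sum_has_derivative:
  fixes a :: "nat \<Rightarrow> real"
  shows "((\<lambda>x. \<Sum>i\<le>Suc n. a i / fact i * (x - c) ^ i) has_real_derivative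
          (\<Sum>i\<le>n. a (Suc i) / fact i * (x - c) ^ i)) (at x within S)"
proof -
  have "((\<lambda>x. a 0 + (\<Sum>i\<le>n. a (Suc i) / fact (Suc i) * (x - c) ^ Suc i)) has_real_derivative
          (\<Sum>i\<le>n. a (Suc i) / fact i * (x - c) ^ i)) (at x within S)"
    by (rule derivative_eq_intros refl)+
      (auto intro!: sum.cong simp: fact_Suc field_simps simp del: power_Suc of_nat_Suc)
  then show ?thesis by (simp add: sum.atMost_Suc_shift del: sum.atMost_Suc)
qed

lemma holder_taylor_remainder:
  fixes D :: "nat \<Rightarrow> real \<Rightarrow> real"
  assumes deriv: "\<And>k t. k < q \<Longrightarrow> t \<in> {a..b} \<Longrightarrow> (D k has_real_derivative D (Suc k) t) (at t within {a..b})"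
    and holder: "\<And>s t. s \<in> {a..b} \<Longrightarrow> t \<in> {a..b} \<Longrightarrow> \<bar>D q s - D q t\<bar> \<le> lam * \<bar>s - t\<bar> powr alpha"
    and "lam \<ge> 0" "alpha \<ge> 0" and c: "c \<in> {a..b}" and x: "x \<in> {a..b}"
  shows "\<bar>D 0 x - (\<Sum>i\<le>q. D i c / fact i * (x - c) ^ i)\<bar> \<le> lam * \<bar>x - c\<bar> powr (real q + alpha) / fact q"
  using deriv holder x
proof (induction q arbitrary: D x)
  case 0
  then show ?case using c by simp
next
  case (Suc q)
  define h where "h x = D 0 x - (\<Sum>i\<le>Suc q. D i c / fact i * (x - c) ^ i)" for x
  define h' where "h' x = D 1 x - (\<Sum>i\<le>q. D (Suc i) c / fact i * (x - c) ^ i)" for x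
  have "\<bar>h x\<bar> \<le> lam / fact q / (real q + alpha + 1) * \<bar>x - c\<bar> powr (real q + alpha + 1)"
  proof (rule abs_le_powr_of_deriv_le_powr[OF c Suc.prems(3)])
    show "h c = 0" by (simp add: h_def)
    show "real q + alpha \<ge> 0" using \<open>alpha \<ge> 0\<close> by simp
    fix t assume t: "t \<in> {a..b}"
    show "(h has_real_derivative h' t) (at t within {a..b})"
      unfolding h_def h'_def using Suc.prems(1)[of 0 t] t
      by (intro DERIV_diff taylor_sum_has_derivative) simp
    show "\<bar>h' t\<bar> \<le> lam / fact q * \<bar>t - c\<bar> powr (real q + alpha)"
      using Suc.IH[of "\<lambda>k. D (Suc k)" t] Suc.prems t by (simp add: h'_def)
  qed
  also have "\<dots> \<le> lam * \<bar>x - c\<bar> powr (real (Suc q) + alpha) / fact (Suc q)"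
  proof -
    have "fact (Suc q) \<le> fact q * (real q + alpha + 1)"
      using \<open>alpha \<ge> 0\<close> by (simp add: fact_Suc algebra_simps)
    then have "lam * \<bar>x - c\<bar> powr (real q + alpha + 1) / (fact q * (real q + alpha + 1))
        \<le> lam * \<bar>x - c\<bar> powr (real q + alpha + 1) / fact (Suc q)"
      using \<open>lam \<ge> 0\<close> by (intro divide_left_mono) auto
    then show ?thesis by (simp add: ac_simps)
  qed
  finally show ?case by (simp add: h_def)
qed

section \<open>Clipped polynomials with grid coefficients\<close>

lemma clip_eq_self: "\<bar>p\<bar> \<le> c \<Longrightarrow> clip c p = p"
  unfolding clip_def by (auto simp: abs_le_iff)

lemma abs_clip_diff_le: "\<bar>v\<bar> \<le> c \<Longrightarrow> \<bar>clip c p - v\<bar> \<le> \<bar>p - v\<bar>"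
  unfolding clip_def by (auto simp: abs_le_iff)

lemma grid_rounding:
  assumes dy: "dy > 0" and K: "2 * B / dy = real K" and v: "\<bar>v\<bar> \<le> B"
  shows "\<exists>y\<in>grid B dy m. \<bar>v - y\<bar> \<le> dy / 2 ^ (m + 1)"
proof -
  define z where "z = (v + B) * 2 ^ m / dy"
  have "0 \<le> z" using v dy by (simp add: z_def)
  then have j: "real (nat (round z)) = of_int (round z)"
    using round_mono[of 0 z] by simp
  have "z \<le> 2 * B * 2 ^ m / dy"
    using v dy unfolding z_def by (intro divide_right_mono mult_right_mono) auto
  also have "\<dots> = real (K * 2 ^ m)" using K dy by (simp add: field_simps)
  finally have "round z \<le> int (K * 2 ^ m)" using round_mono round_of_nat by metis
  then have "real (nat (round z)) \<le> real (K * 2 ^ m)"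
    using j of_int_le_iff[of "round z" "int (K * 2 ^ m)", where 'a = real] by simp
  also have "\<dots> = 2 ^ (m + 1) * B / dy" using K dy by (simp add: field_simps)
  finally have "real (nat (round z)) \<le> 2 ^ (m + 1) * B / dy" .
  then have y: "- B + real (nat (round z)) * dy / 2 ^ m \<in> grid B dy m"
    unfolding grid_def by blast
  have "v - (- B + real (nat (round z)) * dy / 2 ^ m) = (z - of_int (round z)) * (dy / 2 ^ m)"
    using dy j by (simp add: z_def field_simps)
  then have "\<bar>v - (- B + real (nat (round z)) * dy / 2 ^ m)\<bar> = \<bar>z - of_int (round z)\<bar> * (dy / 2 ^ m)"
    using dy by (simp add: abs_mult)
  also have "\<dots> \<le> 1 / 2 * (dy / 2 ^ m)"
    using of_int_round_abs_le[of z] dy by (intro mult_right_mono) (auto simp: abs_minus_commute)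
  finally show ?thesis using y by auto
qed

lemma sum_power_div_fact_le_exp:
  assumes "(u :: real) \<ge> 0"
  shows "(\<Sum>i\<le>n. u ^ i / fact i) \<le> exp u"
proof -
  obtain t where "exp u = (\<Sum>i<Suc n. u ^ i / fact i) + exp t / fact (Suc n) * u ^ Suc n"
    using Maclaurin_exp_le by blast
  then show ?thesis using assms by (simp add: lessThan_Suc_atMost)
qed

lemma abs_taylor_sum_diff_le:
  fixes d e :: "nat \<Rightarrow> real"
  assumes "\<And>i. i \<le> n \<Longrightarrow> \<bar>d i - e i\<bar> \<le> \<epsilon>"
  shows "\<bar>(\<Sum>i\<le>n. d i / fact i * u ^ i) - (\<Sum>i\<le>n. e i / fact i * u ^ i)\<bar> \<le> \<epsilon> * exp \<bar>u\<bar>"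
proof -
  have "\<epsilon> \<ge> 0" using assms[of 0] by simp
  have "\<bar>(\<Sum>i\<le>n. d i / fact i * u ^ i) - (\<Sum>i\<le>n. e i / fact i * u ^ i)\<bar>
      = \<bar>\<Sum>i\<le>n. (d i - e i) * (u ^ i / fact i)\<bar>"
    by (simp add: sum_subtractf[symmetric] field_simps)
  also have "\<dots> \<le> (\<Sum>i\<le>n. \<epsilon> * (\<bar>u\<bar> ^ i / fact i))"
    by (rule order_trans[OF sum_abs sum_mono])
      (use assms in \<open>auto simp: abs_mult power_abs intro!: divide_right_mono mult_right_mono\<close>)
  also have "\<dots> = \<epsilon> * (\<Sum>i\<le>n. \<bar>u\<bar> ^ i / fact i)" by (simp add: sum_distrib_left)
  also have "\<dots> \<le> \<epsilon> * exp \<bar>u\<bar>"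
    using \<open>\<epsilon> \<ge> 0\<close> by (intro mult_left_mono sum_power_div_fact_le_exp) auto
  finally show ?thesis .
qed

lemma holder_grid_taylor_approx:
  assumes f: "f \<in> holder_class B lam q alpha" and "lam \<ge> 0" "alpha \<ge> 0"
    and dy: "dy > 0" "2 * B / dy = real K" and c: "c \<in> {0..1}"
  obtains cf where "\<And>i. i \<le> q \<Longrightarrow> cf i \<in> grid B dy m"
    and "\<And>x. x \<in> {0..1} \<Longrightarrow> \<bar>x - c\<bar> \<le> 1 \<Longrightarrow>
      \<bar>f x - clip B (\<Sum>i\<le>q. cf i / fact i * (x - c) ^ i)\<bar>
        \<le> lam * \<bar>x - c\<bar> powr (real q + alpha) / fact q + dy * exp 1 / 2 ^ (m + 1)"
proof -
  obtain D where D0: "\<forall>x\<in>{0..1}. D 0 x = f x"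
    and D': "\<forall>k<q. \<forall>x\<in>{0..1}. (D k has_real_derivative D (Suc k) x) (at x within {0..1})"
    and DB: "\<forall>k\<le>q. \<forall>x\<in>{0..1}. \<bar>D k x\<bar> \<le> B"
    and holder: "\<forall>x\<in>{0..1}. \<forall>y\<in>{0..1}. \<bar>D q x - D q y\<bar> \<le> lam * \<bar>x - y\<bar> powr alpha"
    using f unfolding holder_class_def by blast
  have "\<forall>i. \<exists>y. i \<le> q \<longrightarrow> y \<in> grid B dy m \<and> \<bar>D i c - y\<bar> \<le> dy / 2 ^ (m + 1)"
    using grid_rounding[OF dy] DB c by blast
  then obtain cf where cf: "\<And>i. i \<le> q \<Longrightarrow> cf i \<in> grid B dy m \<and> \<bar>D i c - cf i\<bar> \<le> dy / 2 ^ (m + 1)"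
    by metis
  show ?thesis
  proof (rule that)
    show "cf i \<in> grid B dy m" if "i \<le> q" for i using cf that by blast
    fix x assume x: "x \<in> {0..1}" and xc: "\<bar>x - c\<bar> \<le> 1"
    define T where "T = (\<Sum>i\<le>q. D i c / fact i * (x - c) ^ i)"
    define S where "S = (\<Sum>i\<le>q. cf i / fact i * (x - c) ^ i)"
    have "\<bar>D 0 x - T\<bar> \<le> lam * \<bar>x - c\<bar> powr (real q + alpha) / fact q"
      unfolding T_def by (rule holder_taylor_remainder) (use D' holder assms c x in auto)
    then have taylor: "\<bar>f x - T\<bar> \<le> lam * \<bar>x - c\<bar> powr (real q + alpha) / fact q"
      using D0 x by simp
    have "\<bar>T - S\<bar> \<le> dy / 2 ^ (m + 1) * exp \<bar>x - c\<bar>"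
      unfolding T_def S_def by (rule abs_taylor_sum_diff_le) (use cf in blast)
    also have "\<dots> \<le> dy / 2 ^ (m + 1) * exp 1"
      by (rule mult_left_mono) (use xc dy in simp_all)
    finally have rounding: "\<bar>T - S\<bar> \<le> dy / 2 ^ (m + 1) * exp 1" .
    have "\<bar>f x\<bar> \<le> B" using DB D0 x by auto
    then have "\<bar>clip B S - f x\<bar> \<le> \<bar>S - f x\<bar>" by (rule abs_clip_diff_le)
    then show "\<bar>f x - clip B S\<bar> \<le> lam * \<bar>x - c\<bar> powr (real q + alpha) / fact q + dy * exp 1 / 2 ^ (m + 1)"
      using taylor rounding by (simp add: abs_minus_commute)
  qed
qed

section \<open>The dyadic cells\<close>

text \<open>cell h k is the k-th interval [kh, (k+1)h) of the uniform partition of mesh h, closed at 1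
  like the intervals I_a; cell_index m a n is the position of I_a^(m,n) among the cells of
  level m, in which passing to the parent interval becomes k div 4.\<close>

definition cell :: "real \<Rightarrow> nat \<Rightarrow> real set" where
  "cell h k = {x. real k * h \<le> x \<and> (x < real (Suc k) * h \<or> (real (Suc k) * h = 1 \<and> x = 1))}"

definition cell_index :: "nat \<Rightarrow> nat \<Rightarrow> nat \<Rightarrow> nat" where
  "cell_index m a n = (a - 1) * 4 ^ m + (n - 1)"

lemma cell_unique:
  assumes "h > 0" "real (Suc k) * h \<le> 1" "real (Suc k') * h \<le> 1" "x \<in> cell h k" "x \<in> cell h k'"
  shows "k = k'"
proof -
  have False if "k1 < k2" "real (Suc k2) * h \<le> 1" "x \<in> cell h k1" "x \<in> cell h k2" for k1 k2
  proof -
    have "real (Suc k1) * h \<le> real k2 * h" using that(1) \<open>h > 0\<close> by (intro mult_right_mono) auto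
    moreover have "real k2 * h < real (Suc k2) * h" using \<open>h > 0\<close> by simp
    ultimately show False using that(2-4) unfolding cell_def mem_Collect_eq by linarith
  qed
  then show ?thesis using assms by (metis linorder_neqE_nat)
qed

lemma cell_exists:
  assumes "L > 0" "x \<in> {0..1}"
  shows "\<exists>k<L. x \<in> cell (1 / real L) k"
proof (cases "x = 1")
  case True
  then show ?thesis using \<open>L > 0\<close> by (intro exI[of _ "L - 1"]) (auto simp: cell_def of_nat_diff)
next
  case False
  define k where "k = nat \<lfloor>x * L\<rfloor>"
  have k: "real k = of_int \<lfloor>x * L\<rfloor>" using assms by (simp add: k_def)
  have "x * L < L" using False assms by simp
  then have "k < L" using assms by (simp add: k_def floor_less_iff nat_less_iff)
  moreover have "x \<in> cell (1 / real L) k"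
    using k assms real_of_int_floor_add_one_gt[of "x * L"] by (simp add: cell_def field_simps)
  ultimately show ?thesis by blast
qed

lemma cell_subset_cell_div4:
  assumes "h > 0"
  shows "cell h k \<subseteq> cell (4 * h) (k div 4)"
proof
  fix x assume x: "x \<in> cell h k"
  have "real (k div 4) * (4 * h) \<le> real k * h"
    using assms by (simp add: mult.assoc[symmetric])
  moreover have "real (Suc k) * h \<le> real (Suc (k div 4)) * (4 * h)"
  proof -
    have "Suc k \<le> Suc (k div 4) * 4" by simp
    then have "real (Suc k) \<le> real (Suc (k div 4)) * 4" by (metis of_nat_le_iff of_nat_mult of_nat_numeral)
    then show ?thesis using assms by (simp add: mult.assoc[symmetric] del: of_nat_Suc)
  qed
  ultimately show "x \<in> cell (4 * h) (k div 4)"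
    using x by (auto simp: cell_def)
qed

lemma cell_subset_unit:
  assumes "h \<ge> 0" "real (Suc k) * h \<le> 1"
  shows "cell h k \<subseteq> {0..1}"
proof
  fix x assume "x \<in> cell h k"
  moreover have "0 \<le> real k * h" using assms by simp
  ultimately show "x \<in> {0..1}" using assms(2) unfolding cell_def by auto
qed

lemma cell_index_bound:
  assumes "a \<in> {1..N}" "n \<in> {1..4 ^ m}"
  shows "cell_index m a n < N * 4 ^ m"
proof -
  have "n - 1 < 4 ^ m" using assms by auto
  then have "cell_index m a n < (a - 1) * 4 ^ m + 4 ^ m" by (simp add: cell_index_def)
  also have "\<dots> = a * 4 ^ m" using assms by (cases a) auto
  also have "\<dots> \<le> N * 4 ^ m" using assms by simp
  finally show ?thesis .
qed

lemma cell_index_inj: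
  assumes "n \<in> {1..4 ^ m}" "n' \<in> {1..4 ^ m}" "1 \<le> a" "1 \<le> a'"
    and "cell_index m a n = cell_index m a' n'"
  shows "a = a' \<and> n = n'"
proof -
  have "cell_index m a n div 4 ^ m = a - 1" "cell_index m a n mod 4 ^ m = n - 1"
    if "n \<in> {1..4 ^ m}" for a n
  proof -
    have "n - 1 < 4 ^ m" using that by auto
    then show "cell_index m a n div 4 ^ m = a - 1" "cell_index m a n mod 4 ^ m = n - 1"
      unfolding cell_index_def by auto
  qed
  then show ?thesis using assms by (metis Suc_pred' less_le_trans zero_less_one atLeastAtMost_iff)
qed

lemma cell_index_surj:
  assumes "k < N * 4 ^ m"
  shows "\<exists>a\<in>{1..N}. \<exists>n\<in>{1..4 ^ m}. cell_index m a n = k"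
proof (intro bexI)
  show "cell_index m (k div 4 ^ m + 1) (k mod 4 ^ m + 1) = k" by (simp add: cell_index_def div_mult_mod_eq)
  show "k div 4 ^ m + 1 \<in> {1..N}" using assms by (simp add: Suc_le_eq div_less_iff_less_mult)
  show "k mod 4 ^ m + 1 \<in> {1..4 ^ m}" by (simp add: Suc_le_eq)
qed

lemma cell_index_parent:
  assumes "1 \<le> m" "1 \<le> n"
  shows "cell_index (m - 1) a (parent n) = cell_index m a n div 4"
proof -
  obtain m' where m: "m = Suc m'" using assms by (cases m) auto
  have "((a - 1) * 4 ^ m' * 4 + (n - 1)) div 4 = (a - 1) * 4 ^ m' + (n - 1) div 4" by simp
  then show ?thesis by (simp add: cell_index_def parent_def m mult_ac)
qed

lemma idx_eq: "dx = 1 / real N \<Longrightarrow> idx dx = {1..N}"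
  by (auto simp: idx_def)

lemma subint_eq_cell:
  assumes "1 \<le> a" "1 \<le> n"
  shows "subint dx a m n = cell (dx / 4 ^ m) (cell_index m a n)"
proof -
  have "lo_pt dx a m n = real (cell_index m a n) * (dx / 4 ^ m)"
    "hi_pt dx a m n = real (Suc (cell_index m a n)) * (dx / 4 ^ m)"
    using assms by (simp_all add: lo_pt_def hi_pt_def cell_index_def of_nat_diff field_simps)
  then show ?thesis by (simp add: subint_def cell_def)
qed

lemma subint_eq_cell_unit:
  assumes "dx = 1 / real N" "a \<in> idx dx" "n \<in> {1..4 ^ m}"
  shows "subint dx a m n = cell (1 / real (N * 4 ^ m)) (cell_index m a n)"
    and "real (Suc (cell_index m a n)) * (1 / real (N * 4 ^ m)) \<le> 1"
proof -
  have a: "a \<in> {1..N}" using assms by (simp add: idx_eq)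
  show "subint dx a m n = cell (1 / real (N * 4 ^ m)) (cell_index m a n)"
    using subint_eq_cell[of a n dx m] a assms by simp
  have "Suc (cell_index m a n) \<le> N * 4 ^ m" using cell_index_bound[OF a assms(3)] by simp
  then show "real (Suc (cell_index m a n)) * (1 / real (N * 4 ^ m)) \<le> 1"
    by (cases "N = 0") (simp_all add: divide_le_eq_1 del: of_nat_Suc of_nat_mult of_nat_power)
qed

lemma subint_subset_unit:
  assumes "dx = 1 / real N" "a \<in> idx dx" "n \<in> {1..4 ^ m}"
  shows "subint dx a m n \<subseteq> {0..1}"
  using cell_subset_unit subint_eq_cell_unit[OF assms] by simp

lemma subint_exists:
  assumes "dx = 1 / real N" "N > 0" "x \<in> {0..1}"
  shows "\<exists>a\<in>idx dx. \<exists>n\<in>{1..4 ^ m}. x \<in> subint dx a m n"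
proof -
  obtain k where "k < N * 4 ^ m" "x \<in> cell (1 / real (N * 4 ^ m)) k"
    using cell_exists[of "N * 4 ^ m" x] assms by auto
  moreover obtain a n where "a \<in> {1..N}" "n \<in> {1..4 ^ m}" "cell_index m a n = k"
    using cell_index_surj[OF \<open>k < N * 4 ^ m\<close>] by blast
  moreover have "a \<in> idx dx" using \<open>a \<in> {1..N}\<close> assms(1) by (simp add: idx_eq)
  ultimately show ?thesis using subint_eq_cell_unit(1)[OF assms(1)] by metis
qed

lemma subint_unique:
  assumes "dx = 1 / real N" "N > 0" "a \<in> idx dx" "n \<in> {1..4 ^ m}" "a' \<in> idx dx" "n' \<in> {1..4 ^ m}"
    and "x \<in> subint dx a m n" "x \<in> subint dx a' m n'"
  shows "a = a' \<and> n = n'"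
proof (rule cell_index_inj)
  show "cell_index m a n = cell_index m a' n'"
    using cell_unique[of "1 / real (N * 4 ^ m)"] assms
      subint_eq_cell_unit[OF assms(1,3,4)] subint_eq_cell_unit[OF assms(1,5,6)] by simp
qed (use assms in \<open>auto simp: idx_eq\<close>)

lemma parent_mem: "1 \<le> m \<Longrightarrow> n \<in> {1..4 ^ m} \<Longrightarrow> parent n \<in> {1..4 ^ (m - 1)}"
  unfolding parent_def by (cases m) auto

lemma subint_subset_parent:
  assumes "dx > 0" "1 \<le> a" "1 \<le> m" "1 \<le> n"
  shows "subint dx a m n \<subseteq> subint dx a (m - 1) (parent n)"
proof -
  have four: "4 * (dx / 4 ^ m) = dx / 4 ^ (m - 1)" using \<open>1 \<le> m\<close> by (cases m) auto
  have "subint dx a m n = cell (dx / 4 ^ m) (cell_index m a n)"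
    using assms by (simp add: subint_eq_cell)
  also have "\<dots> \<subseteq> cell (4 * (dx / 4 ^ m)) (cell_index m a n div 4)"
    using assms by (intro cell_subset_cell_div4) simp
  also have "\<dots> = cell (dx / 4 ^ (m - 1)) (cell_index (m - 1) a (parent n))"
    unfolding four cell_index_parent[OF assms(3,4)] ..
  also have "\<dots> = subint dx a (m - 1) (parent n)"
    using assms by (simp add: subint_eq_cell parent_def)
  finally show ?thesis .
qed

lemma center_mem_subint: "dx > 0 \<Longrightarrow> center dx a m n \<in> subint dx a m n"
  by (simp add: subint_def center_def lo_pt_def hi_pt_def field_simps)

lemma abs_diff_center_le:
  assumes "x \<in> subint dx a m n"
  shows "\<bar>x - center dx a m n\<bar> \<le> dx / (2 * 4 ^ m)"
proof -
  have "lo_pt dx a m n \<le> x" "x \<le> hi_pt dx a m n" using assms by (auto simp: subint_def)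
  moreover have "dx / (2 * 4 ^ m) = (hi_pt dx a m n - lo_pt dx a m n) / 2"
    by (simp add: hi_pt_def lo_pt_def field_simps)
  ultimately show ?thesis unfolding center_def by (simp only:) (auto simp: abs_le_iff field_simps)
qed

lemma subint_chain:
  assumes dx: "dx = 1 / real N" "N > 0" and "x \<in> {0..1}"
  obtains A Nn where "\<And>m. A m \<in> idx dx" "\<And>m. Nn m \<in> {1..4 ^ m}" "\<And>m. x \<in> subint dx (A m) m (Nn m)"
    and "\<And>m. 1 \<le> m \<Longrightarrow> A (m - 1) = A m \<and> Nn (m - 1) = parent (Nn m)"
proof -
  have "\<forall>m. \<exists>a n. a \<in> idx dx \<and> n \<in> {1..4 ^ m} \<and> x \<in> subint dx a m n"
    using subint_exists[OF dx \<open>x \<in> {0..1}\<close>] by blast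
  then obtain A Nn where loc: "\<And>m. A m \<in> idx dx" "\<And>m. Nn m \<in> {1..4 ^ m}" "\<And>m. x \<in> subint dx (A m) m (Nn m)"
    by metis
  moreover have "A (m - 1) = A m \<and> Nn (m - 1) = parent (Nn m)" if "1 \<le> m" for m
  proof -
    have "x \<in> subint dx (A m) (m - 1) (parent (Nn m))"
      using subint_subset_parent[of dx "A m" m "Nn m"] loc dx that by (auto simp: idx_def)
    then show ?thesis using subint_unique[OF dx] loc parent_mem[OF that loc(2)] by metis
  qed
  ultimately show ?thesis by (rule that)
qed

lemma sum_subint_indicator:
  fixes F :: "nat \<Rightarrow> nat \<Rightarrow> real"
  assumes "dx = 1 / real N" "N > 0" "a0 \<in> idx dx" "n0 \<in> {1..4 ^ m}" "x \<in> subint dx a0 m n0"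
  shows "(\<Sum>a\<in>idx dx. \<Sum>n\<in>{1..4 ^ m}. F a n * of_bool (x \<in> subint dx a m n)) = F a0 n0"
proof -
  have unique: "a = a0 \<and> n = n0" if "a \<in> idx dx" "n \<in> {1..4 ^ m}" "x \<in> subint dx a m n" for a n
    using subint_unique[OF assms(1,2) that(1,2) assms(3,4) that(3) assms(5)] .
  have "(\<Sum>n\<in>{1..4 ^ m}. F a n * of_bool (x \<in> subint dx a m n)) = (if a = a0 then F a0 n0 else 0)"
    if "a \<in> idx dx" for a
  proof -
    have "(\<Sum>n\<in>{1..4 ^ m}. F a n * of_bool (x \<in> subint dx a m n))
        = (\<Sum>n\<in>{1..4 ^ m}. if a = a0 \<and> n = n0 then F a0 n0 else 0)"
    proof (rule sum.cong[OF refl])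
      fix n :: nat assume "n \<in> {1..4 ^ m}"
      then have "x \<in> subint dx a m n \<longleftrightarrow> a = a0 \<and> n = n0" using unique that assms(5) by blast
      then show "F a n * of_bool (x \<in> subint dx a m n) = (if a = a0 \<and> n = n0 then F a0 n0 else 0)"
        by auto
    qed
    also have "\<dots> = (if a = a0 then F a0 n0 else 0)" using assms(4) by simp
    finally show ?thesis .
  qed
  then have "(\<Sum>a\<in>idx dx. \<Sum>n\<in>{1..4 ^ m}. F a n * of_bool (x \<in> subint dx a m n))
      = (\<Sum>a\<in>idx dx. if a = a0 then F a0 n0 else 0)"
    by (rule sum.cong[OF refl])
  also have "\<dots> = F a0 n0" using assms(1,3) by (simp add: idx_eq)
  finally show ?thesis .
qed

section \<open>The multiscale approximation\<close>

lemma taylor_error_le_at_level: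
  fixes lam gam alpha dx :: real and q m :: nat
  assumes "lam > 0" "gam > 0" "real q + alpha \<ge> 1 / 2"
    and dx: "dx = 2 * (fact q * gam / (2 * lam)) powr (1 / (real q + alpha))"
  shows "lam * (dx / (2 * 4 ^ m)) powr (real q + alpha) / fact q \<le> gam / 2 ^ (m + 1)"
proof -
  define \<beta> where "\<beta> = real q + alpha"
  define C where "C = fact q * gam / (2 * lam)"
  have "\<beta> > 0" "C > 0" using assms by (simp_all add: \<beta>_def C_def)
  \<comment> \<open>this is where beta >= 1/2 is needed\<close>
  have "2 ^ m = ((4::real) ^ m) powr (1 / 2)"
    by (simp add: powr_half_sqrt real_sqrt_power)
  also have "\<dots> \<le> ((4::real) ^ m) powr \<beta>"
    using assms(3) by (intro powr_mono) (auto simp: \<beta>_def)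
  finally have four: "2 ^ m \<le> ((4::real) ^ m) powr \<beta>" .
  have "dx / (2 * 4 ^ m) = C powr (1 / \<beta>) / 4 ^ m" by (simp add: dx C_def \<beta>_def)
  then have "(dx / (2 * 4 ^ m)) powr \<beta> = (C powr (1 / \<beta>)) powr \<beta> / ((4::real) ^ m) powr \<beta>"
    by (simp add: powr_divide)
  also have "\<dots> = C / ((4::real) ^ m) powr \<beta>" using \<open>\<beta> > 0\<close> \<open>C > 0\<close> by (simp add: powr_powr)
  also have "\<dots> \<le> C / 2 ^ m"
    using four \<open>C > 0\<close> by (intro divide_left_mono) auto
  finally have "lam * (dx / (2 * 4 ^ m)) powr \<beta> / fact q \<le> lam * (C / 2 ^ m) / fact q"
    using assms(1) by (intro divide_right_mono mult_left_mono) auto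
  also have "\<dots> = gam / 2 ^ (m + 1)" using assms(1) by (simp add: C_def field_simps)
  finally show ?thesis by (simp add: \<beta>_def)
qed

lemma polyset_approx_on_subint:
  assumes f: "f \<in> holder_class B lam q alpha" and "lam \<ge> 0" "alpha \<ge> 0"
    and dy: "dy > 0" "2 * B / dy = real K"
    and dx: "dx = 1 / real N" "N > 0" and a: "a \<in> idx dx" and n: "n \<in> {1..4 ^ m}"
  shows "\<exists>P\<in>polyset q B dx dy a m n. \<forall>x\<in>subint dx a m n.
           \<bar>f x - P x\<bar> \<le> lam * (dx / (2 * 4 ^ m)) powr (real q + alpha) / fact q + dy * exp 1 / 2 ^ (m + 1)"
proof -
  define c where "c = center dx a m n"
  have "dx > 0" using dx by simp
  have sub: "subint dx a m n \<subseteq> {0..1}" using subint_subset_unit[OF dx(1) a n] .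
  have "c \<in> {0..1}" using center_mem_subint[OF \<open>dx > 0\<close>, of a m n] sub unfolding c_def by blast
  then obtain cf where cf: "\<And>i. i \<le> q \<Longrightarrow> cf i \<in> grid B dy m"
    and err: "\<And>x. x \<in> {0..1} \<Longrightarrow> \<bar>x - c\<bar> \<le> 1 \<Longrightarrow>
      \<bar>f x - clip B (\<Sum>i\<le>q. cf i / fact i * (x - c) ^ i)\<bar>
        \<le> lam * \<bar>x - c\<bar> powr (real q + alpha) / fact q + dy * exp 1 / 2 ^ (m + 1)"
    by (rule holder_grid_taylor_approx[where m = m, OF f assms(2,3) dy]) (rule that)
  define P where "P x = clip B (\<Sum>i\<le>q. cf i / fact i * (x - c) ^ i)" for x
  have "P \<in> polyset q B dx dy a m n"
    unfolding polyset_def P_def c_def using cf by (intro CollectI exI[of _ cf]) simp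
  moreover have "\<bar>f x - P x\<bar>
      \<le> lam * (dx / (2 * 4 ^ m)) powr (real q + alpha) / fact q + dy * exp 1 / 2 ^ (m + 1)"
    if x: "x \<in> subint dx a m n" for x
  proof -
    have xc: "\<bar>x - c\<bar> \<le> dx / (2 * 4 ^ m)" using abs_diff_center_le[OF x] by (simp add: c_def)
    also have "\<dots> \<le> dx / 1"
    proof (rule divide_left_mono)
      show "1 \<le> 2 * (4::real) ^ m" using one_le_power[of "4::real" m] by linarith
    qed (use \<open>dx > 0\<close> in auto)
    also have "\<dots> \<le> 1" using dx by (simp add: divide_le_eq_1)
    finally have "\<bar>x - c\<bar> \<le> 1" .
    then have "\<bar>f x - P x\<bar> \<le> lam * \<bar>x - c\<bar> powr (real q + alpha) / fact q + dy * exp 1 / 2 ^ (m + 1)"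
      using x sub unfolding P_def by (intro err) auto
    also have "\<dots> \<le> lam * (dx / (2 * 4 ^ m)) powr (real q + alpha) / fact q + dy * exp 1 / 2 ^ (m + 1)"
      using xc \<open>lam \<ge> 0\<close> \<open>alpha \<ge> 0\<close>
      by (intro add_right_mono divide_right_mono mult_left_mono powr_mono2) auto
    finally show ?thesis .
  qed
  ultimately show ?thesis by blast
qed

lemma polyset_approx_at_level:
  assumes f: "f \<in> holder_class B lam q alpha"
    and "lam > 0" "alpha > 0" "real q + alpha \<ge> 1 / 2" "gam > 0"
    and "dx = 2 * (fact q * gam / (2 * lam)) powr (1 / (real q + alpha))" "dy = gam / exp 1"
    and dx: "dx = 1 / real N" "N > 0" and K: "2 * B / dy = real K"
    and "a \<in> idx dx" "n \<in> {1..4 ^ m}"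
  shows "\<exists>P\<in>polyset q B dx dy a m n. \<forall>x\<in>subint dx a m n. \<bar>f x - P x\<bar> \<le> gam / 2 ^ m"
proof -
  have "lam \<ge> 0" "alpha \<ge> 0" "dy > 0" using assms by simp_all
  from polyset_approx_on_subint[OF f this K dx assms(11,12)] obtain P
    where "P \<in> polyset q B dx dy a m n" and "\<forall>x\<in>subint dx a m n.
      \<bar>f x - P x\<bar> \<le> lam * (dx / (2 * 4 ^ m)) powr (real q + alpha) / fact q + dy * exp 1 / 2 ^ (m + 1)"
    by blast
  moreover have "lam * (dx / (2 * 4 ^ m)) powr (real q + alpha) / fact q + dy * exp 1 / 2 ^ (m + 1)
      \<le> gam / 2 ^ m"
    using taylor_error_le_at_level[of lam gam q alpha dx m] assms by simp
  ultimately show ?thesis by (blast intro: order_trans)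
qed

definition multiscale_sum ::
    "real \<Rightarrow> real \<Rightarrow> (nat \<Rightarrow> nat \<Rightarrow> nat \<Rightarrow> real \<Rightarrow> real) \<Rightarrow> nat \<Rightarrow> real \<Rightarrow> real" where
  "multiscale_sum gam dx P M x =
     (\<Sum>a\<in>idx dx. P 0 a 1 x * of_bool (x \<in> subint dx a 0 1)) +
     (\<Sum>m\<in>{1..M}. \<Sum>a\<in>idx dx. \<Sum>n\<in>{1..4 ^ m}.
        clip (3 * gam / 2 ^ m) (P m a n x - P (m - 1) a (parent n) x) * of_bool (x \<in> subint dx a m n))"

lemma multiscale_sum_in_Fclass:
  assumes "\<And>m a n. a \<in> idx dx \<Longrightarrow> n \<in> {1..4 ^ m} \<Longrightarrow> P m a n \<in> polyset q B dx dy a m n"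
  shows "multiscale_sum gam dx P M \<in> Fclass q B gam dx dy M"
proof -
  define Q where "Q a m n = (\<lambda>x. clip (3 * gam / 2 ^ m) (P m a n x - P (m - 1) a (parent n) x))" for a m n
  have "Q a m n \<in> Qset q B gam dx dy a m n" if "m \<in> {1..M}" "a \<in> idx dx" "n \<in> {1..4 ^ m}" for a m n
    using assms[OF that(2,3)] assms[OF that(2) parent_mem[of m n]] that unfolding Qset_def Q_def by auto
  then show ?thesis
    unfolding Fclass_def multiscale_sum_def[abs_def] using assms
    by (intro CollectI exI[of _ "\<lambda>a. P 0 a 1"] exI[of _ Q]) (auto simp: Q_def)
qed

lemma multiscale_sum_approx:
  assumes dx: "dx = 1 / real N" "N > 0" and "x \<in> {0..1}"
    and err: "\<And>m a n x. a \<in> idx dx \<Longrightarrow> n \<in> {1..4 ^ m} \<Longrightarrow> x \<in> subint dx a m n \<Longrightarrow>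
                \<bar>f x - P m a n x\<bar> \<le> gam / 2 ^ m"
  shows "\<bar>f x - multiscale_sum gam dx P M x\<bar> \<le> gam / 2 ^ M"
proof -
  obtain A Nn where loc: "\<And>m. A m \<in> idx dx" "\<And>m. Nn m \<in> {1..4 ^ m}" "\<And>m. x \<in> subint dx (A m) m (Nn m)"
    and chain: "\<And>m. 1 \<le> m \<Longrightarrow> A (m - 1) = A m \<and> Nn (m - 1) = parent (Nn m)"
    using subint_chain[OF dx \<open>x \<in> {0..1}\<close>] by blast
  define E where "E m = P m (A m) (Nn m) x" for m
  have E: "\<bar>f x - E m\<bar> \<le> gam / 2 ^ m" for m using err loc by (simp add: E_def)
  have level0: "(\<Sum>a\<in>idx dx. P 0 a 1 x * of_bool (x \<in> subint dx a 0 1)) = E 0"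
  proof -
    have "(\<Sum>a\<in>idx dx. P 0 a 1 x * of_bool (x \<in> subint dx a 0 1))
        = (\<Sum>a\<in>idx dx. \<Sum>n\<in>{1..4 ^ 0}. P 0 a n x * of_bool (x \<in> subint dx a 0 n))"
      by (simp del: sum_mult_of_bool_eq)
    also have "\<dots> = E 0" unfolding E_def by (rule sum_subint_indicator[OF dx loc])
    finally show ?thesis .
  qed
  have levels: "(\<Sum>a\<in>idx dx. \<Sum>n\<in>{1..4 ^ m}.
      clip (3 * gam / 2 ^ m) (P m a n x - P (m - 1) a (parent n) x) * of_bool (x \<in> subint dx a m n))
      = E m - E (m - 1)" if "1 \<le> m" for m
  proof -
    \<comment> \<open>the clipping at 3 gam/2^m is inactive\<close>
    have "\<bar>E m - E (m - 1)\<bar> \<le> gam / 2 ^ m + gam / 2 ^ (m - 1)"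
      using E[of m] E[of "m - 1"] by linarith
    also have "\<dots> = 3 * gam / 2 ^ m" using that by (cases m) auto
    finally show ?thesis
      using sum_subint_indicator[OF dx loc, where m = m
          and F = "\<lambda>a n. clip (3 * gam / 2 ^ m) (P m a n x - P (m - 1) a (parent n) x)"] chain[OF that]
      by (simp add: E_def clip_eq_self)
  qed
  have "multiscale_sum gam dx P M x = E 0 + (\<Sum>m\<in>{1..M}. E m - E (m - 1))"
    unfolding multiscale_sum_def level0 by (intro arg_cong[where f = "(+) (E 0)"] sum.cong refl levels) simp
  also have "\<dots> = E M" by (induction M) auto
  finally show ?thesis using E[of M] by simp
qed

theorem lemma10:
  fixes B lam alpha gam dx dy :: real and q :: nat
  assumes "B > 0" and "lam > 0" and "0 < alpha" and "alpha \<le> 1"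
    and "real q + alpha \<ge> 1 / 2"
    and "gam > 0"
    and "dx = 2 * (fact q * gam / (2 * lam)) powr (1 / (real q + alpha))"
    and "dy = gam / exp 1"
    and "1 / dx \<in> \<nat>" and "2 * B / dy \<in> \<nat>"
  shows "(\<forall>f\<in>holder_class B lam q alpha. \<exists>g\<in>Fclass q B gam dx dy 0.
            \<forall>x\<in>{0..1}. \<bar>f x - g x\<bar> \<le> gam)
       \<and> (\<forall>M\<ge>1. \<forall>f\<in>holder_class B lam q alpha. \<exists>g\<in>Fclass q B gam dx dy M.
            \<forall>x\<in>{0..1}. \<bar>f x - g x\<bar> \<le> gam / 2 ^ M)"
proof -
  obtain N where N: "1 / dx = real N" using assms(9) by (auto elim: Nats_cases)
  obtain K where K: "2 * B / dy = real K" using assms(10) by (auto elim: Nats_cases)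
  have "real N = 1 / dx" "dx > 0" using N assms by simp_all
  then have "dx = 1 / real N" "real N > 0" by simp_all
  then have dx: "dx = 1 / real N" "N > 0" by simp_all
  have "\<exists>g\<in>Fclass q B gam dx dy M. \<forall>x\<in>{0..1}. \<bar>f x - g x\<bar> \<le> gam / 2 ^ M"
    if f: "f \<in> holder_class B lam q alpha" for f M
  proof -
    have "\<forall>m a n. \<exists>P. a \<in> idx dx \<and> n \<in> {1..4 ^ m} \<longrightarrow>
        P \<in> polyset q B dx dy a m n \<and> (\<forall>x\<in>subint dx a m n. \<bar>f x - P x\<bar> \<le> gam / 2 ^ m)"
      using polyset_approx_at_level[OF f assms(2,3,5,6,7,8) dx K] by blast
    then obtain P where "\<And>m a n. a \<in> idx dx \<Longrightarrow> n \<in> {1..4 ^ m} \<Longrightarrow> P m a n \<in> polyset q B dx dy a m n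
        \<and> (\<forall>x\<in>subint dx a m n. \<bar>f x - P m a n x\<bar> \<le> gam / 2 ^ m)"
      by metis
    then show ?thesis
      using multiscale_sum_in_Fclass multiscale_sum_approx[OF dx] by (metis (no_types, lifting))
  qed
  from this[where M = 0] this show ?thesis by auto
qed

end
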